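(* Let $n$ be a positive integer and $N$ an even non-negative integer. Then $N$ has a potentially connected graphical partition with exactly $n$ parts if and only if $N$ has a forcibly connected graphical partition with exactly $n$ parts.
   Context: A partition of an integer $N$ is a non-increasing sequence of positive integers summing to $N$; its terms are its parts. A partition is graphical if it is the vertex degree sequence of some simple graph (finite, undirected, no loops or multiple edges); such a graph is a realization. A graphical partition is potentially connected if at least one of its realizations is connected, and forcibly connected if all of its realizations are connected. *)

theory Defs
  imports Main
begin

definition simple_graph :: "nat \<Rightarrow> (nat \<Rightarrow> nat \<Rightarrow> bool) \<Rightarrow> bool" where
  "simple_graph n E \<longleftrightarrow> (\<forall>i j. E i j \<longrightarrow> i < n \<and> j < n \<and> i \<noteq> j \<and> E j i)"

definition degree :: "nat \<Rightarrow> (nat \<Rightarrow> nat \<Rightarrow> bool) \<Rightarrow> nat \<Rightarrow> nat" where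
  "degree n E i = card {j. j < n \<and> E i j}"

definition connected_graph :: "nat \<Rightarrow> (nat \<Rightarrow> nat \<Rightarrow> bool) \<Rightarrow> bool" where
  "connected_graph n E \<longleftrightarrow> (\<forall>i<n. \<forall>j<n. E\<^sup>*\<^sup>* i j)"

definition is_partition :: "nat \<Rightarrow> nat \<Rightarrow> nat list \<Rightarrow> bool" where
  "is_partition N n d \<longleftrightarrow> length d = n \<and> sorted_wrt (\<ge>) d \<and> (\<forall>x\<in>set d. 0 < x) \<and> sum_list d = N"

definition realization :: "nat list \<Rightarrow> (nat \<Rightarrow> nat \<Rightarrow> bool) \<Rightarrow> bool" where
  "realization d E \<longleftrightarrow> simple_graph (length d) E \<and> (\<forall>i<length d. degree (length d) E i = d ! i)"

definition graphical :: "nat list \<Rightarrow> bool" where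
  "graphical d \<longleftrightarrow> (\<exists>E. realization d E)"

definition potentially_connected :: "nat list \<Rightarrow> bool" where
  "potentially_connected d \<longleftrightarrow> graphical d \<and> (\<exists>E. realization d E \<and> connected_graph (length d) E)"

definition forcibly_connected :: "nat list \<Rightarrow> bool" where
  "forcibly_connected d \<longleftrightarrow> graphical d \<and> (\<forall>E. realization d E \<longrightarrow> connected_graph (length d) E)"

end

theory Submission
  imports Defs
begin

text \<open>A connected graph on \<open>n\<close> vertices has at least \<open>n - 1\<close> edges and a simple graph at most
  \<open>n(n - 1)/2\<close>, so a potentially connected partition of \<open>N\<close> into \<open>n\<close> parts forces
  \<open>2(n - 1) \<le> N \<le> n(n - 1)\<close>. Conversely, every even \<open>N\<close> in this range is the degree sum
  of the graph formed by the first \<open>N/2\<close> edges of \<open>K\<^sub>n\<close> in lexicographic order. That graph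
  contains the star at vertex \<open>0\<close>, so its degree sequence has a part \<open>n - 1\<close>, and any
  realization of such a sequence has a universal vertex and is therefore connected.\<close>

definition arcs :: "nat \<Rightarrow> (nat \<Rightarrow> nat \<Rightarrow> bool) \<Rightarrow> (nat \<times> nat) set" where
  "arcs n E = {(i, j). i < n \<and> j < n \<and> E i j}"

lemma finite_arcs [simp]: "finite (arcs n E)"
  by (rule finite_subset[of _ "{..<n} \<times> {..<n}"]) (auto simp: arcs_def)

lemma card_arcs_eq_sum_degree: "card (arcs n E) = (\<Sum>i<n. degree n E i)"
proof -
  have "arcs n E = (SIGMA i:{..<n}. {j. j < n \<and> E i j})"
    by (auto simp: arcs_def)
  then show ?thesis
    by (simp add: card_SigmaI degree_def)
qed

lemma sum_list_eq_card_arcs: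
  assumes "realization d E"
  shows "sum_list d = card (arcs (length d) E)"
  using assms by (simp add: card_arcs_eq_sum_degree sum_list_sum_nth atLeast0LessThan realization_def)

lemma card_arcs_complete: "card (arcs n (\<lambda>i j. i \<noteq> j)) = n * (n - 1)"
proof -
  have "arcs n (\<lambda>i j. i \<noteq> j) = (SIGMA i:{..<n}. {..<n} - {i})"
    by (auto simp: arcs_def)
  then show ?thesis
    by (simp add: card_SigmaI)
qed

lemma card_arcs_le:
  assumes "simple_graph n E"
  shows "card (arcs n E) \<le> n * (n - 1)"
proof -
  have "arcs n E \<subseteq> arcs n (\<lambda>i j. i \<noteq> j)"
    using assms by (auto simp: arcs_def simple_graph_def)
  then show ?thesis
    by (metis card_arcs_complete card_mono finite_arcs)
qed

lemma partition_length_le: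
  assumes "is_partition N n d"
  shows "n \<le> N"
proof -
  have "sum_list (map (\<lambda>_. 1::nat) d) \<le> sum_list (map id d)"
    using assms by (intro sum_list_mono) (auto simp: is_partition_def Suc_le_eq)
  then show ?thesis
    using assms by (simp add: is_partition_def sum_list_triv)
qed

lemma connected_graph_parent:
  assumes sg: "simple_graph n E" and cg: "connected_graph n E" and n: "0 < n"
  obtains p rank :: "nat \<Rightarrow> nat"
  where "\<And>v. 0 < v \<Longrightarrow> v < n \<Longrightarrow> p v < n \<and> E v (p v) \<and> rank (p v) < rank v"
proof -
  define rank where "rank v = (LEAST k. (E ^^ k) 0 v)" for v
  have "\<exists>u. u < n \<and> E v u \<and> rank u < rank v" if v: "0 < v" "v < n" for v
  proof -
    have "E\<^sup>*\<^sup>* 0 v" using cg n v unfolding connected_graph_def by auto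
    then obtain k where "(E ^^ k) 0 v" by (auto simp: rtranclp_power)
    then have path: "(E ^^ rank v) 0 v" unfolding rank_def by (rule LeastI)
    with v obtain m where m: "rank v = Suc m" by (cases "rank v") auto
    with path obtain u where "(E ^^ m) 0 u" and "E u v" by auto
    moreover from \<open>(E ^^ m) 0 u\<close> have "rank u \<le> m"
      unfolding rank_def by (rule Least_le)
    moreover from \<open>E u v\<close> have "u < n" and "E v u"
      using sg unfolding simple_graph_def by auto
    ultimately show ?thesis using m by auto
  qed
  with that show thesis by metis
qed

lemma card_arcs_ge_connected:
  assumes sg: "simple_graph n E" and "connected_graph n E" and "0 < n"
  shows "2 * (n - 1) \<le> card (arcs n E)"
proof -
  obtain p rank :: "nat \<Rightarrow> nat"
    where p: "\<And>v. 0 < v \<Longrightarrow> v < n \<Longrightarrow> p v < n \<and> E v (p v) \<and> rank (p v) < rank v"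
    using connected_graph_parent[OF assms] by blast
  define up where "up = (\<lambda>v. (v, p v)) ` {1..<n}"
  define down where "down = (\<lambda>v. (p v, v)) ` {1..<n}"
  have "card up = n - 1" "card down = n - 1"
    unfolding up_def down_def by (simp_all add: card_image inj_on_def)
  moreover have "up \<inter> down = {}"
  proof -
    have "(v, p v) \<noteq> (p w, w)" if "v \<in> {1..<n}" "w \<in> {1..<n}" for v w
    proof
      assume "(v, p v) = (p w, w)"
      then have "v = p w" "w = p v" by (metis prod.inject)+
      then have "rank w < rank v" "rank v < rank w"
        using p[of v] p[of w] that by auto
      then show False by simp
    qed
    then show ?thesis unfolding up_def down_def disjoint_iff by blast
  qed
  moreover have "up \<union> down \<subseteq> arcs n E"
  proof -
    have "(v, p v) \<in> arcs n E \<and> (p v, v) \<in> arcs n E" if "v \<in> {1..<n}" for v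
    proof -
      have "p v < n" "E v (p v)" "v < n"
        using p[of v] that by auto
      then show ?thesis
        using sg unfolding arcs_def simple_graph_def by blast
    qed
    then show ?thesis unfolding up_def down_def by blast
  qed
  ultimately have "card (up \<union> down) = 2 * (n - 1)"
    unfolding up_def down_def by (simp add: card_Un_disjoint)
  with \<open>up \<union> down \<subseteq> arcs n E\<close> show ?thesis
    by (metis card_mono finite_arcs)
qed

lemma connected_graph_if_universal_vertex:
  assumes sg: "simple_graph n E" and "u < n" and "degree n E u = n - 1"
  shows "connected_graph n E"
proof -
  have "{j. j < n \<and> E u j} \<subseteq> {..<n} - {u}"
    using sg unfolding simple_graph_def by auto
  moreover have "card ({..<n} - {u}) = n - 1"
    using \<open>u < n\<close> by simp
  ultimately have "{j. j < n \<and> E u j} = {..<n} - {u}"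
    using assms(3) unfolding degree_def by (intro card_subset_eq) auto
  then have "E u j" and "E j u" if "j < n" "j \<noteq> u" for j
    using that sg unfolding simple_graph_def by blast+
  then have "E\<^sup>*\<^sup>* u j" and "E\<^sup>*\<^sup>* j u" if "j < n" for j
    using that by (cases "j = u"; auto)+
  then show ?thesis
    unfolding connected_graph_def by (meson rtranclp_trans)
qed

text \<open>The edges of the complete graph on \<open>{0..<n}\<close> whose pair \<open>(min, max)\<close> is
  lexicographically at most \<open>(a, c)\<close>: vertices below \<open>a\<close> are universal and \<open>a\<close> is joined
  to all vertices up to \<open>c\<close>.\<close>
definition lex_graph :: "nat \<Rightarrow> nat \<Rightarrow> nat \<Rightarrow> nat \<Rightarrow> nat \<Rightarrow> bool" where
  "lex_graph a c n i j \<longleftrightarrow>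
     i < n \<and> j < n \<and> i \<noteq> j \<and> (min i j < a \<or> (min i j = a \<and> max i j \<le> c))"

definition lex_degree :: "nat \<Rightarrow> nat \<Rightarrow> nat \<Rightarrow> nat \<Rightarrow> nat" where
  "lex_degree a c n v = (if v < a then n - 1 else if v = a then c else if v \<le> c then a + 1 else a)"

lemma simple_graph_lex_graph: "simple_graph n (lex_graph a c n)"
  unfolding simple_graph_def lex_graph_def by (auto simp: min_def max_def)

lemma degree_lex_graph:
  assumes "a \<le> c" "c < n" "v < n"
  shows "degree n (lex_graph a c n) v = lex_degree a c n v"
proof -
  consider "v < a" | "v = a" | "a < v" "v \<le> c" | "c < v" by linarith
  then show ?thesis
  proof cases
    case 1
    then have "{j. j < n \<and> lex_graph a c n v j} = {..<n} - {v}"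
      using assms unfolding lex_graph_def by (auto simp: min_def max_def)
    then show ?thesis using 1 assms unfolding degree_def lex_degree_def by simp
  next
    case 2
    then have "{j. j < n \<and> lex_graph a c n v j} = {..c} - {v}"
      using assms unfolding lex_graph_def by (auto simp: min_def max_def)
    then show ?thesis using 2 assms unfolding degree_def lex_degree_def by simp
  next
    case 3
    then have "{j. j < n \<and> lex_graph a c n v j} = {..a}"
      using assms unfolding lex_graph_def by (auto simp: min_def max_def)
    then show ?thesis using 3 unfolding degree_def lex_degree_def by simp
  next
    case 4
    then have "{j. j < n \<and> lex_graph a c n v j} = {..<a}"
      using assms unfolding lex_graph_def by (auto simp: min_def max_def)
    then show ?thesis using 4 assms unfolding degree_def lex_degree_def by simp
  qed
qed

lemma card_arcs_lex_graph_star: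
  assumes "2 \<le> n"
  shows "card (arcs n (lex_graph 1 1 n)) = 2 * (n - 1)"
proof -
  obtain m where n: "n = Suc m" using assms by (cases n) auto
  have "card (arcs n (lex_graph 1 1 n)) = (\<Sum>v<Suc m. lex_degree 1 1 n v)"
    unfolding card_arcs_eq_sum_degree n[symmetric]
    using assms by (intro sum.cong) (auto simp: degree_lex_graph)
  also have "\<dots> = lex_degree 1 1 n 0 + (\<Sum>v<m. lex_degree 1 1 n (Suc v))"
    by (rule sum.lessThan_Suc_shift)
  also have "\<dots> = 2 * (n - 1)"
  proof -
    have "lex_degree 1 1 n (Suc v) = 1" for v
      by (cases v) (simp_all add: lex_degree_def)
    then show ?thesis
      using n by (simp add: lex_degree_def)
  qed
  finally show ?thesis .
qed

lemma card_arcs_lex_graph_Suc: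
  assumes "a \<le> c" "Suc c < n"
  shows "card (arcs n (lex_graph a (Suc c) n)) = card (arcs n (lex_graph a c n)) + 2"
proof -
  have "arcs n (lex_graph a (Suc c) n) = insert (a, Suc c) (insert (Suc c, a) (arcs n (lex_graph a c n)))"
    using assms by (auto simp: arcs_def lex_graph_def min_def max_def)
  moreover have "(a, Suc c) \<notin> arcs n (lex_graph a c n)" "(Suc c, a) \<notin> arcs n (lex_graph a c n)"
    using assms by (auto simp: arcs_def lex_graph_def min_def)
  ultimately show ?thesis
    using assms by simp
qed

lemma lex_graph_row_end: "lex_graph a (n - 1) n = lex_graph (Suc a) (Suc a) n"
  by (auto simp: lex_graph_def fun_eq_iff min_def max_def)

lemma arcs_lex_graph_complete:
  assumes "n \<le> Suc (Suc a)"
  shows "arcs n (lex_graph a (n - 1) n) = arcs n (\<lambda>i j. i \<noteq> j)"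
  using assms by (auto simp: arcs_def lex_graph_def min_def max_def)

lemma card_arcs_lex_graph_exists:
  assumes "2 \<le> n" "2 * (n - 1) + 2 * k \<le> n * (n - 1)"
  shows "\<exists>a c. 1 \<le> a \<and> a \<le> c \<and> c < n \<and> card (arcs n (lex_graph a c n)) = 2 * (n - 1) + 2 * k"
  using assms(2)
proof (induction k)
  case 0
  then show ?case
    using assms(1) card_arcs_lex_graph_star by fastforce
next
  case (Suc k)
  then obtain a c where ac: "1 \<le> a" "a \<le> c" "c < n"
    and card: "card (arcs n (lex_graph a c n)) = 2 * (n - 1) + 2 * k"
    by auto
  show ?case
  proof (cases "Suc c < n")
    case True
    then show ?thesis
      using ac card card_arcs_lex_graph_Suc[OF ac(2) True] by (intro exI[of _ a] exI[of _ "Suc c"]) auto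
  next
    case False
    then have c: "c = n - 1" using ac by simp
    have "Suc (Suc a) < n"
    proof (rule ccontr)
      assume "\<not> Suc (Suc a) < n"
      then have "card (arcs n (lex_graph a c n)) = n * (n - 1)"
        using c arcs_lex_graph_complete card_arcs_complete by simp
      with card Suc.prems show False by simp
    qed
    moreover have "card (arcs n (lex_graph (Suc a) (Suc (Suc a)) n)) = 2 * (n - 1) + 2 * Suc k"
      using card_arcs_lex_graph_Suc[of "Suc a" "Suc a" n] calculation card[unfolded c lex_graph_row_end]
      by simp
    ultimately show ?thesis
      using ac by (intro exI[of _ "Suc a"] exI[of _ "Suc (Suc a)"]) auto
  qed
qed

lemma lex_degree_partition:
  assumes "1 \<le> a" "a \<le> c" "c < n"
  defines "d \<equiv> map (lex_degree a c n) [0..<n]"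
  shows "is_partition (card (arcs n (lex_graph a c n))) n d" and "forcibly_connected d"
proof -
  have real: "realization d (lex_graph a c n)"
    using assms by (simp add: d_def realization_def simple_graph_lex_graph degree_lex_graph)
  have "sorted_wrt (\<ge>) d"
    using assms unfolding d_def sorted_wrt_iff_nth_less by (auto simp: lex_degree_def)
  moreover have "\<forall>x\<in>set d. 0 < x"
    using assms unfolding d_def lex_degree_def by auto
  ultimately show "is_partition (card (arcs n (lex_graph a c n))) n d"
    using sum_list_eq_card_arcs[OF real] by (simp add: is_partition_def d_def)
  have "connected_graph n E" if "realization d E" for E
  proof (rule connected_graph_if_universal_vertex)
    show "simple_graph n E" and "degree n E 0 = n - 1"
      using that assms by (auto simp: realization_def d_def lex_degree_def)
  qed (use assms in simp)
  then show "forcibly_connected d"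
    using real by (auto simp: forcibly_connected_def graphical_def d_def)
qed

theorem proposition1:
  fixes n N :: nat
  assumes "0 < n" and "even N"
  shows "(\<exists>d. is_partition N n d \<and> potentially_connected d) \<longleftrightarrow>
         (\<exists>d. is_partition N n d \<and> forcibly_connected d)"
proof
  assume "\<exists>d. is_partition N n d \<and> potentially_connected d"
  then obtain d E where d: "is_partition N n d" and E: "realization d E" "connected_graph n E"
    unfolding potentially_connected_def is_partition_def by auto
  have sg: "simple_graph n E" and N: "N = card (arcs n E)"
    using d E sum_list_eq_card_arcs[OF E(1)] by (auto simp: realization_def is_partition_def)
  have "2 * (n - 1) \<le> N" and "N \<le> n * (n - 1)"
    using card_arcs_ge_connected[OF sg E(2) assms(1)] card_arcs_le[OF sg] N by auto
  moreover have "2 \<le> n"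
    using partition_length_le[OF d] \<open>N \<le> n * (n - 1)\<close> assms(1)
    by (cases "n = 1") auto
  moreover obtain k where "N = 2 * (n - 1) + 2 * k"
    using \<open>2 * (n - 1) \<le> N\<close> assms(2)
    by (metis add_diff_inverse_nat dvd_diff_nat dvd_triv_left evenE not_le)
  ultimately obtain a c where "1 \<le> a" "a \<le> c" "c < n" "card (arcs n (lex_graph a c n)) = N"
    using card_arcs_lex_graph_exists by metis
  then show "\<exists>d. is_partition N n d \<and> forcibly_connected d"
    using lex_degree_partition by metis
next
  assume "\<exists>d. is_partition N n d \<and> forcibly_connected d"
  then show "\<exists>d. is_partition N n d \<and> potentially_connected d"
    unfolding forcibly_connected_def potentially_connected_def graphical_def by auto
qed

end
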